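(* Assume Schanuel's conjecture $(S)$. Then there exist transcendental positive real numbers $x,y,s,t$ with $s\neq t$ such that $x^{y}\neq y^{x}$, $s^{t}=t^{s}$, and the three numbers $x^{y}$, $y^{x}$, $s^{t}$ are integers. (For instance one may take $x\in(2,3)$ with $x^{2^{1/x}}=3$ and $y=2^{1/x}$, so that $x^y=3$, $y^x=2$, and $s<t$ positive reals with $s^t=t^s=17$.)
   Context: Schanuel's conjecture $(S)$: if $\alpha_1,\dots,\alpha_n\in\mathbb{C}$ are linearly independent over $\mathbb{Q}$, then the transcendence degree of $\mathbb{Q}(\alpha_1,\dots,\alpha_n,e^{\alpha_1},\dots,e^{\alpha_n})$ over $\mathbb{Q}$ is at least $n$. Powers of positive reals are the usual real powers. *)

theory Defs
  imports "HOL-Analysis.Analysis" "HOL-Computational_Algebra.Polynomial"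
begin

text \<open>The family z 0, ..., z (k-1) of complex numbers is algebraically independent over the
  rationals: every polynomial in k variables with rational coefficients (given as a finite sum of
  coefficients times monomials, the exponent vectors being supported on the first k indices)
  vanishing at (z 0, ..., z (k-1)) has all coefficients zero.\<close>
definition alg_indep_Q :: "nat \<Rightarrow> (nat \<Rightarrow> complex) \<Rightarrow> bool" where
  "alg_indep_Q k z \<longleftrightarrow>
     (\<forall>(c :: (nat \<Rightarrow> nat) \<Rightarrow> complex) S.
        finite S \<and> S \<subseteq> {e. \<forall>i\<ge>k. e i = 0} \<and> (\<forall>e\<in>S. c e \<in> \<rat>) \<and>
        (\<Sum>e\<in>S. c e * (\<Prod>i<k. z i ^ e i)) = 0 \<longrightarrow> (\<forall>e\<in>S. c e = 0))"

definition trdeg_Q_ge :: "nat \<Rightarrow> complex set \<Rightarrow> bool" where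
  "trdeg_Q_ge n A \<longleftrightarrow> (\<exists>z. inj_on z {..<n} \<and> z ` {..<n} \<subseteq> A \<and> alg_indep_Q n z)"

definition lin_indep_Q :: "nat \<Rightarrow> (nat \<Rightarrow> complex) \<Rightarrow> bool" where
  "lin_indep_Q n a \<longleftrightarrow>
     (\<forall>q :: nat \<Rightarrow> complex. (\<forall>i<n. q i \<in> \<rat>) \<and> (\<Sum>i<n. q i * a i) = 0 \<longrightarrow> (\<forall>i<n. q i = 0))"

definition schanuel :: bool where
  "schanuel \<longleftrightarrow>
     (\<forall>n (a :: nat \<Rightarrow> complex). lin_indep_Q n a \<longrightarrow>
        trdeg_Q_ge n (a ` {..<n} \<union> (\<lambda>i. exp (a i)) ` {..<n}))"

end

theory Submission
  imports Defs "HOL-Computational_Algebra.Primes"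
begin

text \<open>If \<open>u^v = p^a\<close> and \<open>v^u = p^b\<close> for a prime \<open>p\<close>, then under Schanuel's conjecture \<open>u\<close> is
  transcendental when \<open>a, b > 0\<close> and \<open>a = 1\<close> or \<open>b = 1\<close>. Suppose \<open>u\<close> algebraic. Then so is \<open>v\<close>: for
  rational \<open>u\<close>, \<open>v\<close> is a rational power of \<open>p\<close>; for irrational \<open>u\<close>, the numbers \<open>ln p, ln u, ln v\<close>
  are linearly independent over \<open>\<rat>\<close> unless \<open>v\<close> is algebraic, and Schanuel then contradicts the
  multiplicative relations between them. If one of the algebraic numbers \<open>u, v\<close> is irrational, the
  Gelfond-Schneider theorem (itself a consequence of Schanuel) makes \<open>v^u\<close> or \<open>u^v\<close> transcendental;
  if both are rational, \<open>u^v = p\<close> forces \<open>v \<le> 1\<close>, contradicting \<open>v^u > 1\<close>. The intermediate value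
  theorem supplies \<open>x^y = 2, y^x = 4\<close> and \<open>s^t = t^s = 19\<close>, so \<open>x, y, s, t\<close> are transcendental.\<close>

lemma algebraic_rat_affine:
  fixes x :: "'a::field_char_0"
  assumes "algebraic x" and "r \<in> \<rat>" and "s \<in> \<rat>"
  shows "algebraic (r * x + s)"
proof (cases "r = 0")
  case True
  then show ?thesis using assms(3) by (simp add: rat_imp_algebraic)
next
  case False
  obtain p where p_Rats: "\<forall>i. coeff p i \<in> \<rat>" and "p \<noteq> 0" and "poly p x = 0"
    using assms(1) unfolding algebraic_altdef by blast
  define q where "q = pcompose p [:- s / r, 1 / r:]"
  have "poly q (r * x + s) = 0"
    unfolding q_def poly_pcompose using False \<open>poly p x = 0\<close> by (simp add: field_simps)
  moreover have "q \<noteq> 0"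
    unfolding q_def using \<open>p \<noteq> 0\<close> False by (simp add: pcompose_eq_0_iff)
  moreover have "coeff q i \<in> \<rat>" for i
    unfolding q_def
    by (rule coeff_pcompose_semiring_closed)
      (use p_Rats assms(2,3) in \<open>auto simp: coeff_pCons split: nat.splits\<close>)
  ultimately show ?thesis unfolding algebraic_altdef by blast
qed

lemma algebraic_rat_moebius:
  fixes x :: "'a::field_char_0"
  assumes x: "algebraic x" and "a \<in> \<rat>" "c \<in> \<rat>" "d \<in> \<rat>" and "c * x + d \<noteq> 0"
  shows "algebraic (a * x / (c * x + d))"
proof (cases "c = 0")
  case True
  then show ?thesis
    using algebraic_rat_affine[OF x, of "a / d" 0] assms(2,4) by simp
next
  case False
  have "algebraic (inverse (c * x + d))"
    using algebraic_rat_affine[OF x] assms(3,4) by blast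
  then have "algebraic (- (a * d / c) * inverse (c * x + d) + a / c)"
    by (rule algebraic_rat_affine) (use assms(2-4) in auto)
  moreover have "- (a * d / c) * inverse (c * x + d) + a / c = a * x / (c * x + d)"
    using False assms(5) by (simp add: divide_simps) (simp add: algebra_simps)
  ultimately show ?thesis by simp
qed

lemma algebraic_nat_powr_rat:
  assumes "n > 0" and "r \<in> \<rat>"
  shows "algebraic (real n powr r)"
proof -
  obtain a b :: int where "b > 0" and r: "r = of_int a / of_int b"
    using assms(2) by (rule Rats_cases')
  have "real n powr of_int a \<in> \<rat>"
    using assms(1) by (simp add: powr_real_of_int)
  then have "algebraic (root (nat b) (real n powr of_int a))"
    by (intro algebraic_nth_root_real rat_imp_algebraic)
  also have "root (nat b) (real n powr of_int a) = real n powr r"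
    using \<open>b > 0\<close> by (simp add: root_powr_inverse powr_powr r)
  finally show ?thesis .
qed

lemma Rats_complexE:
  assumes "(q :: complex) \<in> \<rat>"
  obtains r :: real where "r \<in> \<rat>" and "q = of_real r"
proof -
  from assms obtain a b where "q = of_int a / of_int b" by (rule Rats_cases')
  then show thesis by (intro that[of "of_int a / of_int b"]) auto
qed

lemma subset_set_card_eq_length:
  assumes "S \<subseteq> set xs" and "card S = length xs"
  shows "S = set xs \<and> distinct xs"
proof -
  have "S = set xs"
    using assms card_length[of xs] by (intro card_seteq) auto
  with assms(2) show ?thesis by (simp add: card_distinct)
qed

lemma alg_indep_QD:
  assumes "alg_indep_Q n z" and "finite S" and "S \<subseteq> {e. \<forall>i\<ge>n. e i = 0}"
    and "\<forall>e\<in>S. c e \<in> \<rat>" and "(\<Sum>e\<in>S. c e * (\<Prod>i<n. z i ^ e i)) = 0" and "e \<in> S"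
  shows "c e = 0"
  using assms unfolding alg_indep_Q_def by blast

text \<open>With \<open>M, M'\<close> the two monomials and \<open>p\<close> of degree \<open>d\<close> annihilating \<open>\<beta>\<close>, the identity
  \<open>0 = p(\<beta>) M'^d = (\<Sum>j\<le>d. p\<^sub>j M^j M'^(d - j))\<close> is a polynomial relation between the \<open>z i\<close>
  whose monomials are pairwise distinct unless \<open>e = e'\<close>.\<close>
lemma alg_indep_Q_monomial_eq:
  fixes z :: "nat \<Rightarrow> complex" and e e' :: "nat \<Rightarrow> nat"
  assumes indep: "alg_indep_Q n z" and e: "\<forall>i\<ge>n. e i = 0" and e': "\<forall>i\<ge>n. e' i = 0"
    and "algebraic \<beta>" and rel: "(\<Prod>i<n. z i ^ e i) = \<beta> * (\<Prod>i<n. z i ^ e' i)"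
  shows "e = e'"
proof (rule ccontr)
  assume "e \<noteq> e'"
  then obtain i where i: "e i \<noteq> e' i" by auto
  obtain p where p_Rats: "\<forall>i. coeff p i \<in> \<rat>" and "p \<noteq> 0" and "poly p \<beta> = 0"
    using \<open>algebraic \<beta>\<close> unfolding algebraic_altdef by blast
  define d where "d = degree p"
  define E where "E = (\<lambda>j i. j * e i + (d - j) * e' i)"
  define M' where "M' = (\<Prod>i<n. z i ^ e' i)"
  have inj: "inj_on E {..d}"
  proof (rule inj_onI)
    fix j k assume "j \<in> {..d}" "k \<in> {..d}" "E j = E k"
    then have "int (E j i) = int (E k i)" by simp
    then have "int j * e i + (int d - j) * e' i = int k * e i + (int d - k) * e' i"
      using \<open>j \<in> {..d}\<close> \<open>k \<in> {..d}\<close> unfolding E_def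
      by (simp only: of_nat_add of_nat_mult of_nat_diff atMost_iff)
    then have "(int j - int k) * (int (e i) - int (e' i)) = 0" by (simp add: algebra_simps)
    then show "j = k" using i by simp
  qed
  have monomial_E: "(\<Prod>i<n. z i ^ E j i) = \<beta> ^ j * M' ^ d" if "j \<le> d" for j
  proof -
    have "(\<Prod>i<n. z i ^ E j i) = (\<Prod>i<n. (z i ^ e i) ^ j * (z i ^ e' i) ^ (d - j))"
      unfolding E_def by (intro prod.cong refl) (simp add: power_add mult.commute flip: power_mult)
    also have "\<dots> = (\<Prod>i<n. z i ^ e i) ^ j * M' ^ (d - j)"
      unfolding M'_def prod.distrib prod_power_distrib ..
    also have "\<dots> = \<beta> ^ j * M' ^ d"
      using that unfolding rel M'_def[symmetric]
      by (simp add: power_mult_distrib mult.assoc flip: power_add)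
    finally show ?thesis .
  qed
  define c where "c = (\<lambda>f. coeff p (inv_into {..d} E f))"
  have c_E: "c (E j) = coeff p j" if "j \<le> d" for j
    using inv_into_f_f[OF inj] that unfolding c_def by simp
  have "(\<Sum>f\<in>E ` {..d}. c f * (\<Prod>i<n. z i ^ f i)) = (\<Sum>j\<le>d. coeff p j * \<beta> ^ j * M' ^ d)"
    by (simp add: sum.reindex[OF inj] c_E monomial_E mult.assoc)
  also have "\<dots> = poly p \<beta> * M' ^ d"
    unfolding poly_altdef d_def sum_distrib_right ..
  finally have "(\<Sum>f\<in>E ` {..d}. c f * (\<Prod>i<n. z i ^ f i)) = 0"
    using \<open>poly p \<beta> = 0\<close> by simp
  moreover have "E ` {..d} \<subseteq> {f. \<forall>i\<ge>n. f i = 0}"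
    unfolding E_def using e e' by auto
  moreover have "\<forall>f\<in>E ` {..d}. c f \<in> \<rat>"
    using p_Rats by (simp add: c_def)
  ultimately have "c (E j) = 0" if "j \<le> d" for j
    using alg_indep_QD[OF indep] that by blast
  then have "coeff p j = 0" for j
    using c_E by (cases "j \<le> d") (auto simp: d_def coeff_eq_0)
  then show False using \<open>p \<noteq> 0\<close> by (simp add: poly_eq_iff)
qed

lemma prod_power_indicator:
  fixes z :: "nat \<Rightarrow> 'a::comm_monoid_mult"
  assumes "i < n"
  shows "(\<Prod>k<n. z k ^ indicator {i} k) = z i"
proof -
  have "(\<Prod>k<n. z k ^ indicator {i} k) = (\<Prod>k<n. if k = i then z k else 1)"
    by (intro prod.cong) (auto split: split_indicator)
  also have "\<dots> = z i"
    using assms by (simp add: prod.delta)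
  finally show ?thesis .
qed

lemma alg_indep_Q_transcendental:
  assumes indep: "alg_indep_Q n z" and "y \<in> z ` {..<n}"
  shows "\<not> algebraic y"
proof
  assume "algebraic y"
  from assms(2) obtain i where "i < n" "y = z i" by auto
  then have rel: "(\<Prod>k<n. z k ^ indicator {i} k) = y * (\<Prod>k<n. z k ^ (0::nat))"
    by (simp add: prod_power_indicator)
  have "indicator {i} = (\<lambda>_. 0::nat)"
    by (rule alg_indep_Q_monomial_eq[OF indep _ _ \<open>algebraic y\<close> rel])
      (use \<open>i < n\<close> in \<open>auto split: split_indicator\<close>)
  then show False
    by (metis indicator_simps(1) insertI1 zero_neq_one)
qed

lemma alg_indep_Q_no_algebraic_ratio:
  assumes indep: "alg_indep_Q n z" and "x \<in> z ` {..<n}" "y \<in> z ` {..<n}" "x \<noteq> y"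
    and "algebraic \<beta>"
  shows "x \<noteq> \<beta> * y"
proof
  assume rel: "x = \<beta> * y"
  from assms(2,3) obtain i j where "i < n" "j < n" "x = z i" "y = z j" by auto
  with rel have monomials: "(\<Prod>k<n. z k ^ indicator {i} k) = \<beta> * (\<Prod>k<n. z k ^ indicator {j} k)"
    by (simp add: prod_power_indicator)
  have "indicator {i} = (indicator {j} :: nat \<Rightarrow> nat)"
    by (rule alg_indep_Q_monomial_eq[OF indep _ _ \<open>algebraic \<beta>\<close> monomials])
      (use \<open>i < n\<close> \<open>j < n\<close> in \<open>auto split: split_indicator\<close>)
  then have "i = j"
    by (metis indicator_simps(1) indicator_simps(2) insertI1 singletonD zero_neq_one)
  with \<open>x = z i\<close> \<open>y = z j\<close> \<open>x \<noteq> y\<close> show False by simp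
qed

lemma alg_indep_Q_no_algebraic_ratio_product:
  assumes indep: "alg_indep_Q n z" and "x \<in> z ` {..<n}" "y \<in> z ` {..<n}" "w \<in> z ` {..<n}"
    and "x \<noteq> y" and "algebraic \<beta>"
  shows "x * y \<noteq> \<beta> * w"
proof
  assume rel: "x * y = \<beta> * w"
  from assms(2-4) obtain i j k where "i < n" "j < n" "k < n" "x = z i" "y = z j" "w = z k"
    by auto
  with rel have monomials: "(\<Prod>m<n. z m ^ (indicator {i} m + indicator {j} m))
      = \<beta> * (\<Prod>m<n. z m ^ indicator {k} m)"
    by (simp add: power_add prod.distrib prod_power_indicator)
  have "(\<lambda>m. indicator {i} m + indicator {j} m) = (indicator {k} :: nat \<Rightarrow> nat)"
    by (rule alg_indep_Q_monomial_eq[OF indep _ _ \<open>algebraic \<beta>\<close> monomials])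
      (use \<open>i < n\<close> \<open>j < n\<close> \<open>k < n\<close> in \<open>auto split: split_indicator\<close>)
  then have "indicator {i} i + indicator {j} i = (indicator {k} i :: nat)"
    and "indicator {i} j + indicator {j} j = (indicator {k} j :: nat)"
    by metis+
  moreover have "i \<noteq> j" using \<open>x = z i\<close> \<open>y = z j\<close> \<open>x \<noteq> y\<close> by auto
  ultimately have "indicator {k} i = (1::nat)" and "indicator {k} j = (1::nat)"
    by simp_all
  then show False
    using \<open>i \<noteq> j\<close> by (cases "i = k") (simp_all add: indicator_def)
qed

lemma schanuel_real:
  fixes xs :: "real list"
  assumes "schanuel"
    and lin_indep: "\<And>r. \<forall>i<length xs. r i \<in> \<rat> \<Longrightarrow> (\<Sum>i<length xs. r i * xs ! i) = 0
      \<Longrightarrow> \<forall>i<length xs. r i = 0"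
  shows "\<exists>z. inj_on z {..<length xs} \<and> z ` {..<length xs} \<subseteq> of_real ` (set xs \<union> exp ` set xs)
    \<and> alg_indep_Q (length xs) z"
proof -
  define n where "n = length xs"
  define a :: "nat \<Rightarrow> complex" where "a = (\<lambda>i. of_real (xs ! i))"
  have "lin_indep_Q n a"
    unfolding lin_indep_Q_def
  proof safe
    fix q :: "nat \<Rightarrow> complex" and i
    assume q_Rats: "\<forall>i<n. q i \<in> \<rat>" and q_sum: "(\<Sum>i<n. q i * a i) = 0" and "i < n"
    have q_of_real: "q k = of_real (Re (q k))" and Re_Rats: "Re (q k) \<in> \<rat>" if "k < n" for k
    proof -
      from q_Rats that obtain r where "r \<in> \<rat>" "q k = of_real r"
        by (meson Rats_complexE)
      then show "q k = of_real (Re (q k))" "Re (q k) \<in> \<rat>" by simp_all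
    qed
    have "of_real (\<Sum>k<n. Re (q k) * xs ! k) = (\<Sum>k<n. q k * a k)"
      unfolding a_def of_real_sum of_real_mult
      by (intro sum.cong refl) (metis q_of_real lessThan_iff)
    with q_sum have "(\<Sum>k<length xs. Re (q k) * xs ! k) = 0"
      unfolding n_def by (simp only: of_real_eq_0_iff)
    moreover have "\<forall>k<length xs. Re (q k) \<in> \<rat>"
      using Re_Rats unfolding n_def by blast
    ultimately have "\<forall>k<length xs. Re (q k) = 0"
      by (rule lin_indep[rotated])
    then have "Re (q i) = 0"
      using \<open>i < n\<close> unfolding n_def by blast
    have "q i = of_real (Re (q i))" using q_of_real \<open>i < n\<close> .
    also have "\<dots> = 0" using \<open>Re (q i) = 0\<close> by simp
    finally show "q i = 0" .
  qed
  then have "trdeg_Q_ge n (a ` {..<n} \<union> (\<lambda>i. exp (a i)) ` {..<n})"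
    by (rule \<open>schanuel\<close>[unfolded schanuel_def, rule_format])
  moreover have "a ` {..<n} = of_real ` set xs"
    unfolding a_def n_def set_conv_nth by auto
  moreover have "(\<lambda>i. exp (a i)) ` {..<n} = of_real ` exp ` set xs"
    unfolding a_def n_def set_conv_nth by (auto simp: exp_of_real)
  ultimately show ?thesis unfolding trdeg_Q_ge_def n_def by (simp add: image_Un)
qed

text \<open>Of \<open>ln x, w ln x, x, x powr w\<close> only the two logarithms can be transcendental, so Schanuel
  makes them algebraically independent, contradicting their algebraic ratio \<open>w\<close>.\<close>
lemma schanuel_imp_gelfond_schneider:
  fixes x w :: real
  assumes "schanuel" and "0 < x" "x \<noteq> 1" "algebraic x" and "algebraic w" "w \<notin> \<rat>"
  shows "\<not> algebraic (x powr w)"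
proof
  assume "algebraic (x powr w)"
  have "ln x \<noteq> 0" using assms(2,3) by simp
  have "\<forall>i<2. r i = 0" if "\<forall>i<2. r i \<in> \<rat>" and "r 0 * ln x + r 1 * (w * ln x) = 0"
    for r :: "nat \<Rightarrow> real"
  proof -
    from that have "r 0 \<in> \<rat>" "r 1 \<in> \<rat>" by simp_all
    from that(2) have "ln x * (r 0 + r 1 * w) = 0" by (simp add: algebra_simps)
    with \<open>ln x \<noteq> 0\<close> have rel: "r 0 + r 1 * w = 0" by simp
    have "r 1 = 0"
    proof (rule ccontr)
      assume "r 1 \<noteq> 0"
      with rel have "w = - r 0 / r 1" by (simp add: field_simps)
      with \<open>r 0 \<in> \<rat>\<close> \<open>r 1 \<in> \<rat>\<close> \<open>w \<notin> \<rat>\<close> show False by simp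
    qed
    with rel show ?thesis by (simp add: less_2_cases_iff)
  qed
  then have "\<exists>z. inj_on z {..<2}
      \<and> z ` {..<2} \<subseteq> of_real ` {ln x, w * ln x, exp (ln x), exp (w * ln x)} \<and> alg_indep_Q 2 z"
    using schanuel_real[OF \<open>schanuel\<close>, of "[ln x, w * ln x]"]
    by (simp add: numeral_2_eq_2 insert_commute)
  then obtain z where inj: "inj_on z {..<2}"
    and range: "z ` {..<2} \<subseteq> of_real ` {ln x, w * ln x, exp (ln x), exp (w * ln x)}"
    and indep: "alg_indep_Q 2 z"
    by blast
  have "z ` {..<2} \<subseteq> set [of_real (w * ln x), of_real (ln x)]"
  proof
    fix y assume y: "y \<in> z ` {..<2}"
    then have "\<not> algebraic y" by (rule alg_indep_Q_transcendental[OF indep])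
    with y range \<open>algebraic x\<close> \<open>algebraic (x powr w)\<close> assms(2)
    show "y \<in> set [of_real (w * ln x), of_real (ln x)]"
      by (auto simp: powr_def)
  qed
  moreover have "card (z ` {..<2}) = length [of_real (w * ln x), of_real (ln x) :: complex]"
    using card_image[OF inj] by simp
  ultimately have "z ` {..<2} = set [of_real (w * ln x), of_real (ln x)]
      \<and> distinct [of_real (w * ln x), of_real (ln x) :: complex]"
    by (rule subset_set_card_eq_length)
  then have "of_real (w * ln x) \<noteq> of_real w * (of_real (ln x) :: complex)"
    by (intro alg_indep_Q_no_algebraic_ratio[OF indep]) (simp_all add: \<open>algebraic w\<close>)
  then show False by simp
qed

lemma powr_pair_logs_lin_indep:
  fixes L u v a b :: real
  assumes "L \<noteq> 0" and "0 < u" "algebraic u" "u \<notin> \<rat>" and "\<not> algebraic v"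
    and "a \<in> \<rat>" "a \<noteq> 0" "b \<in> \<rat>" "b \<noteq> 0"
    and rel_u: "v * ln u = a * L" and rel_v: "u * ln v = b * L"
    and "q0 \<in> \<rat>" "q1 \<in> \<rat>" "q2 \<in> \<rat>" and lin: "q0 * L + q1 * ln u + q2 * ln v = 0"
  shows "q0 = 0 \<and> q1 = 0 \<and> q2 = 0"
proof -
  have "L * (v * (q0 * u + q2 * b) + q1 * a * u) = u * v * (q0 * L + q1 * ln u + q2 * ln v)"
    using rel_u rel_v by (simp add: algebra_simps)
  with lin \<open>L \<noteq> 0\<close> have rel: "v * (q0 * u + q2 * b) + q1 * a * u = 0" by simp
  have v_coeff: "q0 * u + q2 * b = 0"
  proof (rule ccontr)
    assume nz: "q0 * u + q2 * b \<noteq> 0"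
    with rel have "v = (- q1 * a) * u / (q0 * u + q2 * b)" by (simp add: field_simps)
    moreover have "algebraic ((- q1 * a) * u / (q0 * u + q2 * b))"
      by (rule algebraic_rat_moebius) (use assms nz in auto)
    ultimately show False using \<open>\<not> algebraic v\<close> by simp
  qed
  with rel \<open>a \<noteq> 0\<close> \<open>0 < u\<close> have "q1 = 0" by simp
  have "q0 = 0"
  proof (rule ccontr)
    assume "q0 \<noteq> 0"
    with v_coeff have "u = - (q2 * b) / q0" by (simp add: field_simps)
    with \<open>q0 \<in> \<rat>\<close> \<open>q2 \<in> \<rat>\<close> \<open>b \<in> \<rat>\<close> \<open>u \<notin> \<rat>\<close> show False by simp
  qed
  with v_coeff \<open>b \<noteq> 0\<close> \<open>q1 = 0\<close> show ?thesis by simp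
qed

lemma not_alg_indep_Q_three_of_four:
  fixes l m n r \<alpha> \<beta> \<gamma> :: complex
  assumes "inj_on z {..<3}" and img: "z ` {..<3} \<subseteq> {l, m, n, r}" and "l \<noteq> n"
    and "algebraic \<alpha>" "algebraic \<beta>" "algebraic \<gamma>"
    and rel_1: "r * m = \<alpha> * l" and rel_2: "l = \<beta> * n" and rel_3: "r * m = \<gamma> * n"
  shows "\<not> alg_indep_Q 3 z"
proof
  assume indep: "alg_indep_Q 3 z"
  have card: "card (z ` {..<3}) = 3"
    using card_image[OF \<open>inj_on z {..<3}\<close>] by simp
  consider (l_n) "l \<in> z ` {..<3}" "n \<in> z ` {..<3}" | (no_n) "n \<notin> z ` {..<3}"
    | (no_l) "l \<notin> z ` {..<3}"
    by blast
  then show False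
  proof cases
    case l_n
    from alg_indep_Q_no_algebraic_ratio[OF indep l_n \<open>l \<noteq> n\<close> \<open>algebraic \<beta>\<close>] rel_2
    show False ..
  next
    case no_n
    with img have "z ` {..<3} \<subseteq> set [r, m, l]" by auto
    from subset_set_card_eq_length[OF this] card
    have "r \<in> z ` {..<3}" "m \<in> z ` {..<3}" "l \<in> z ` {..<3}" "r \<noteq> m" by simp_all
    from alg_indep_Q_no_algebraic_ratio_product[OF indep this \<open>algebraic \<alpha>\<close>] rel_1
    show False ..
  next
    case no_l
    with img have "z ` {..<3} \<subseteq> set [r, m, n]" by auto
    from subset_set_card_eq_length[OF this] card
    have "r \<in> z ` {..<3}" "m \<in> z ` {..<3}" "n \<in> z ` {..<3}" "r \<noteq> m" by simp_all
    from alg_indep_Q_no_algebraic_ratio_product[OF indep this \<open>algebraic \<gamma>\<close>] rel_3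
    show False ..
  qed
qed

text \<open>Schanuel yields three algebraically independent numbers among \<open>L, ln u, ln v\<close> and
  \<open>v\<close> (the other exponentials being algebraic), but any three of these four are tied by one of
  \<open>v ln u = a L\<close>, \<open>L = (u/b) ln v\<close>, \<open>v ln u = (a u/b) ln v\<close>.\<close>
lemma schanuel_powr_pair_algebraic:
  fixes L u v a b :: real
  assumes "schanuel" and "L \<noteq> 0" "algebraic (exp L)"
    and "0 < u" "0 < v" "algebraic u" "u \<notin> \<rat>"
    and "a \<in> \<rat>" "a \<noteq> 0" "b \<in> \<rat>" "b \<noteq> 0"
    and rel_u: "v * ln u = a * L" and rel_v: "u * ln v = b * L"
  shows "algebraic v"
proof (rule ccontr)
  assume "\<not> algebraic v"
  have "\<forall>i<3. r i = 0"
    if "\<forall>i<3. r i \<in> \<rat>" and "r 0 * L + r 1 * ln u + r 2 * ln v = 0" for r :: "nat \<Rightarrow> real"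
  proof -
    from that(1) have "r 0 \<in> \<rat>" "r 1 \<in> \<rat>" "r 2 \<in> \<rat>" by simp_all
    with powr_pair_logs_lin_indep[OF assms(2,4,6,7) \<open>\<not> algebraic v\<close> assms(8-13)] that(2)
    have "r 0 = 0" "r 1 = 0" "r 2 = 0" by simp_all
    then show ?thesis by (simp add: less_Suc_eq numeral_3_eq_3 numeral_2_eq_2)
  qed
  then have "\<exists>z. inj_on z {..<3}
      \<and> z ` {..<3} \<subseteq> of_real ` {L, ln u, ln v, exp L, exp (ln u), exp (ln v)}
      \<and> alg_indep_Q 3 z"
    using schanuel_real[OF \<open>schanuel\<close>, of "[L, ln u, ln v]"]
    by (simp add: numeral_3_eq_3 numeral_2_eq_2 insert_commute add.assoc)
  then obtain z where inj: "inj_on z {..<3}"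
    and range: "z ` {..<3} \<subseteq> of_real ` {L, ln u, ln v, exp L, exp (ln u), exp (ln v)}"
    and indep: "alg_indep_Q 3 z"
    by blast
  define cL cu cv cV :: complex
    where "cL = of_real L" and "cu = of_real (ln u)" and "cv = of_real (ln v)" and "cV = of_real v"
  have img: "z ` {..<3} \<subseteq> {cL, cu, cv, cV}"
  proof
    fix y assume y: "y \<in> z ` {..<3}"
    then have "\<not> algebraic y" by (rule alg_indep_Q_transcendental[OF indep])
    with y range assms(3,4,5,6) show "y \<in> {cL, cu, cv, cV}"
      unfolding cL_def cu_def cv_def cV_def by auto
  qed
  have "cL \<noteq> cv"
  proof
    assume "cL = cv"
    then have "ln v = L" by (simp add: cL_def cv_def)
    with rel_v \<open>L \<noteq> 0\<close> have "u = b" by simp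
    with \<open>b \<in> \<rat>\<close> \<open>u \<notin> \<rat>\<close> show False by simp
  qed
  have rel_1: "cV * cu = of_real a * cL"
    unfolding cV_def cu_def cL_def by (simp flip: of_real_mult add: rel_u)
  have rel_2: "cL = of_real (u / b) * cv"
    unfolding cL_def cv_def using rel_v \<open>b \<noteq> 0\<close> by (simp flip: of_real_mult add: field_simps)
  have rel_3: "cV * cu = of_real (a * u / b) * cv"
    using rel_1 rel_2 by simp
  have "algebraic (of_real a :: complex)"
    using \<open>a \<in> \<rat>\<close> by (simp add: rat_imp_algebraic)
  moreover have "algebraic (of_real (u / b) :: complex)" "algebraic (of_real (a * u / b) :: complex)"
    unfolding algebraic_of_real_iff using algebraic_rat_affine[OF \<open>algebraic u\<close>, of "1 / b" 0]
      algebraic_rat_affine[OF \<open>algebraic u\<close>, of "a / b" 0] assms(8,10)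
    by simp_all
  ultimately have "\<not> alg_indep_Q 3 z"
    using not_alg_indep_Q_three_of_four[OF inj img \<open>cL \<noteq> cv\<close> _ _ _ rel_1 rel_2 rel_3] by blast
  with indep show False by contradiction
qed

lemma rat_power_eq_prime_power_dvd:
  fixes u :: real and p m n :: nat
  assumes "prime p" and "u \<in> \<rat>" "0 < u" "0 < m" and eq: "u ^ m = real p ^ n"
  shows "m dvd n"
proof -
  obtain A B :: int where "B > 0" "coprime A B" and u: "u = of_int A / of_int B"
    using \<open>u \<in> \<rat>\<close> by (rule Rats_cases')
  have "A > 0" using \<open>0 < u\<close> \<open>B > 0\<close> u by (simp add: zero_less_divide_iff)
  from eq have "real_of_int (A ^ m) = real_of_int (int p ^ n * B ^ m)"
    using \<open>B > 0\<close> unfolding u by (simp add: power_divide field_simps)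
  then have int_eq: "A ^ m = int p ^ n * B ^ m" by (simp only: of_int_eq_iff)
  then have "B ^ m dvd A ^ m" by simp
  then have "B dvd A" using \<open>0 < m\<close> by simp
  then have "\<bar>B\<bar> = 1" using coprime_common_divisor_int[OF \<open>coprime A B\<close> _ dvd_refl] by blast
  with \<open>B > 0\<close> have "B = 1" by simp
  with int_eq have "A ^ m = int p ^ n" by simp
  moreover have "prime_elem (int p)" using \<open>prime p\<close> by (simp add: prime_imp_prime_elem)
  moreover have "multiplicity (int p) (A ^ m) = m * multiplicity (int p) A"
    by (rule prime_elem_multiplicity_power_distrib) (use \<open>prime_elem (int p)\<close> \<open>A > 0\<close> in auto)
  ultimately have "n = m * multiplicity (int p) A" by simp
  then show ?thesis by simp
qed

lemma rat_powr_eq_prime_le_one: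
  fixes u v :: real
  assumes "prime p" and "u \<in> \<rat>" "v \<in> \<rat>" "0 < u" "0 < v" and eq: "u powr v = real p"
  shows "v \<le> 1"
proof -
  obtain C D :: int where "D > 0" "coprime C D" and v: "v = of_int C / of_int D"
    using \<open>v \<in> \<rat>\<close> by (rule Rats_cases')
  have "C > 0" using \<open>0 < v\<close> \<open>D > 0\<close> v by (simp add: zero_less_divide_iff)
  have "u ^ nat C = u powr (v * D)"
    using \<open>0 < u\<close> \<open>C > 0\<close> \<open>D > 0\<close> v by (simp add: powr_realpow flip: of_nat_nat)
  also have "\<dots> = real p ^ nat D"
    using \<open>0 < u\<close> \<open>D > 0\<close> prime_gt_0_nat[OF \<open>prime p\<close>]
    by (simp add: eq powr_realpow flip: powr_powr of_nat_nat)
  finally have "nat C dvd nat D"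
    using rat_power_eq_prime_power_dvd[OF \<open>prime p\<close> \<open>u \<in> \<rat>\<close> \<open>0 < u\<close>] \<open>C > 0\<close> by simp
  then have "C dvd D" using \<open>C > 0\<close> \<open>D > 0\<close> by (simp add: nat_dvd_iff)
  then have "\<bar>C\<bar> = 1" using coprime_common_divisor_int[OF \<open>coprime C D\<close> dvd_refl] by blast
  with \<open>C > 0\<close> have "C = 1" by simp
  then show ?thesis using v \<open>D > 0\<close> by simp
qed

lemma schanuel_powr_pair_transcendental:
  fixes u v :: real and p a b :: nat
  assumes "schanuel" and "prime p" and "0 < u" "0 < v"
    and powr_u: "u powr v = real p ^ a" and powr_v: "v powr u = real p ^ b"
    and "0 < a" "0 < b" and "a = 1 \<or> b = 1"
  shows "\<not> algebraic u"
proof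
  assume "algebraic u"
  define L where "L = ln (real p)"
  have "real p > 1" using prime_gt_1_nat[OF \<open>prime p\<close>] by simp
  then have "L > 0" and "algebraic (exp L)" by (simp_all add: L_def)
  have rel_u: "v * ln u = a * L"
    using arg_cong[OF powr_u, of ln] \<open>0 < u\<close> by (simp add: L_def ln_realpow)
  have rel_v: "u * ln v = b * L"
    using arg_cong[OF powr_v, of ln] \<open>0 < v\<close> by (simp add: L_def ln_realpow)
  have "0 < v * ln u" unfolding rel_u using \<open>0 < a\<close> \<open>L > 0\<close> by simp
  then have "1 < u" using \<open>0 < u\<close> \<open>0 < v\<close> by (simp add: zero_less_mult_iff)
  have "0 < u * ln v" unfolding rel_v using \<open>0 < b\<close> \<open>L > 0\<close> by simp
  then have "1 < v" using \<open>0 < u\<close> \<open>0 < v\<close> by (simp add: zero_less_mult_iff)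
  have "algebraic v"
  proof (cases "u \<in> \<rat>")
    case True
    have "real p powr (b / u) = exp (b / u * L)"
      using \<open>real p > 1\<close> by (simp add: powr_def L_def)
    also have "b / u * L = ln v"
      using rel_v \<open>0 < u\<close> by (simp add: field_simps)
    finally have "v = real p powr (b / u)"
      using \<open>0 < v\<close> by simp
    then show ?thesis
      using algebraic_nat_powr_rat[of p "b / u"] \<open>real p > 1\<close> True by simp
  next
    case False
    show ?thesis
      by (rule schanuel_powr_pair_algebraic[OF \<open>schanuel\<close> _ \<open>algebraic (exp L)\<close> \<open>0 < u\<close> \<open>0 < v\<close>
            \<open>algebraic u\<close> False _ _ _ _ rel_u rel_v])
        (use \<open>L > 0\<close> \<open>0 < a\<close> \<open>0 < b\<close> in auto)
  qed
  consider (rational) "u \<in> \<rat>" "v \<in> \<rat>" | (u_irrational) "u \<notin> \<rat>" | (v_irrational) "v \<notin> \<rat>"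
    by blast
  then show False
  proof cases
    case rational
    from \<open>a = 1 \<or> b = 1\<close> show False
    proof
      assume "a = 1"
      with rat_powr_eq_prime_le_one[OF \<open>prime p\<close> rational \<open>0 < u\<close> \<open>0 < v\<close>] powr_u
      have "v \<le> 1" by simp
      with \<open>1 < v\<close> show False by simp
    next
      assume "b = 1"
      with rat_powr_eq_prime_le_one[OF \<open>prime p\<close> rational(2,1) \<open>0 < v\<close> \<open>0 < u\<close>] powr_v
      have "u \<le> 1" by simp
      with \<open>1 < u\<close> show False by simp
    qed
  next
    case u_irrational
    with schanuel_imp_gelfond_schneider[OF \<open>schanuel\<close> \<open>0 < v\<close> _ \<open>algebraic v\<close> \<open>algebraic u\<close>]
    have "\<not> algebraic (v powr u)" using \<open>1 < v\<close> by simp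
    with powr_v show False by (metis algebraic_of_nat of_nat_numeral of_nat_power)
  next
    case v_irrational
    with schanuel_imp_gelfond_schneider[OF \<open>schanuel\<close> \<open>0 < u\<close> _ \<open>algebraic u\<close> \<open>algebraic v\<close>]
    have "\<not> algebraic (u powr v)" using \<open>1 < u\<close> by simp
    with powr_u show False by (metis algebraic_of_nat of_nat_numeral of_nat_power)
  qed
qed

lemma powr_pair_2_4_exists: "\<exists>x y :: real. 0 < x \<and> 0 < y \<and> x powr y = 2 \<and> y powr x = 4"
proof -
  define F where "F = (\<lambda>x::real. 4 powr (1 / x) * ln x)"
  have "\<forall>x. 1 \<le> x \<and> x \<le> 2 \<longrightarrow> isCont F x"
    unfolding F_def by (auto intro!: continuous_intros)
  moreover have "F 1 \<le> ln 2" and "ln 2 \<le> F 2"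
    by (simp_all add: F_def powr_half_sqrt)
  ultimately obtain x where "1 \<le> x" "F x = ln 2"
    using IVT[of F 1 "ln 2" 2] by auto
  define y where "y = 4 powr (1 / x)"
  have "x powr y = exp (F x)"
    using \<open>1 \<le> x\<close> by (simp add: powr_def F_def y_def)
  also have "\<dots> = 2" using \<open>F x = ln 2\<close> by simp
  finally have "x powr y = 2" .
  moreover have "y powr x = 4"
    using \<open>1 \<le> x\<close> by (simp add: y_def powr_powr)
  ultimately show ?thesis
    using \<open>1 \<le> x\<close> by (intro exI[of _ x] exI[of _ y]) (simp add: y_def)
qed

text \<open>The solutions of \<open>s^t = t^s\<close> with \<open>t = w s\<close>, \<open>w > 1\<close>, are \<open>s = w^(1/(w - 1))\<close>; along this
  curve \<open>ln (s^t) = G w\<close> passes \<open>ln 16\<close> at \<open>w = 2\<close> and exceeds \<open>ln 19\<close> at \<open>w = 9\<close>.\<close>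
lemma powr_commuting_pair_19_exists:
  "\<exists>s t :: real. 0 < s \<and> 0 < t \<and> s \<noteq> t \<and> s powr t = 19 \<and> t powr s = 19"
proof -
  define G where "G = (\<lambda>w::real. w * exp (ln w / (w - 1)) * (ln w / (w - 1)))"
  have "\<forall>w. 2 \<le> w \<and> w \<le> 9 \<longrightarrow> isCont G w"
    unfolding G_def by (auto intro!: continuous_intros)
  moreover have "G 2 \<le> ln 19"
  proof -
    have "G 2 = 4 * ln 2" unfolding G_def by simp
    also have "\<dots> = ln (2 ^ 4)" using ln_realpow[of 2 4] by simp
    also have "\<dots> \<le> ln 19" by simp
    finally show ?thesis .
  qed
  moreover have "ln 19 \<le> G 9"
  proof -
    have "ln (9::real) = 2 * ln 3" using ln_realpow[of 3 2] by simp
    then have G9: "G 9 = 9 * exp (ln 3 / 4) * (ln 3 / 4)" unfolding G_def by simp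
    have "ln ((11/9::real) ^ 4) \<le> ln 3" by (simp add: power_divide)
    then have "ln (11/9::real) \<le> ln 3 / 4" by (simp add: ln_realpow)
    then have "11/9 \<le> exp (ln (3::real) / 4)"
      by (metis exp_le_cancel_iff exp_ln zero_less_divide_iff zero_less_numeral)
    have "ln (19::real) * 4 = ln (19 ^ 4)" using ln_realpow[of "19::real" 4] by simp
    also have "\<dots> \<le> ln (3 ^ 11)" by simp
    also have "\<dots> = 11 * ln 3" using ln_realpow[of "3::real" 11] by simp
    finally have "ln (19::real) \<le> 9 * (11/9) * (ln 3 / 4)" by simp
    also have "\<dots> \<le> 9 * exp (ln 3 / 4) * (ln 3 / 4)"
      using \<open>11/9 \<le> exp (ln 3 / 4)\<close> by (intro mult_right_mono mult_left_mono) auto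
    finally show ?thesis unfolding G9 .
  qed
  ultimately obtain w where "2 \<le> w" "G w = ln 19"
    using IVT[of G 2 "ln 19" 9] by auto
  define s where "s = exp (ln w / (w - 1))"
  define t where "t = w * s"
  have "0 < s" "0 < t" "s \<noteq> t"
    using \<open>2 \<le> w\<close> by (simp_all add: s_def t_def)
  have ln_s: "ln s = ln w / (w - 1)" unfolding s_def by simp
  have ln_t: "ln t = w * (ln w / (w - 1))"
    using \<open>2 \<le> w\<close> \<open>0 < s\<close> by (simp add: t_def ln_mult ln_s field_simps)
  have "t * ln s = G w" unfolding G_def ln_s by (simp add: t_def s_def)
  moreover have "s * ln t = G w" unfolding G_def ln_t by (simp add: s_def)
  ultimately have "t * ln s = ln 19" and "s * ln t = ln 19"
    using \<open>G w = ln 19\<close> by simp_all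
  then show ?thesis
    using \<open>0 < s\<close> \<open>0 < t\<close> \<open>s \<noteq> t\<close> by (intro exI[of _ s] exI[of _ t]) (simp add: powr_def)
qed

theorem mainTheorem2:
  assumes "schanuel"
  shows "\<exists>(x::real) (y::real) (s::real) (t::real).
           x > 0 \<and> y > 0 \<and> s > 0 \<and> t > 0 \<and>
           \<not> algebraic x \<and> \<not> algebraic y \<and> \<not> algebraic s \<and> \<not> algebraic t \<and>
           s \<noteq> t \<and> x powr y \<noteq> y powr x \<and> s powr t = t powr s \<and>
           x powr y \<in> \<int> \<and> y powr x \<in> \<int> \<and> s powr t \<in> \<int>"
proof -
  obtain x y :: real where "0 < x" "0 < y" and xy: "x powr y = real 2 ^ 1" "y powr x = real 2 ^ 2"
    using powr_pair_2_4_exists by auto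
  obtain s t :: real where "0 < s" "0 < t" "s \<noteq> t" and st: "s powr t = real 19 ^ 1" "t powr s = real 19 ^ 1"
    using powr_commuting_pair_19_exists by auto
  have "prime (2::nat)" and "prime (19::nat)"
    by (auto simp: prime_nat_iff' atLeastLessThan_nat_numeral)
  have "\<not> algebraic x" "\<not> algebraic y"
    using schanuel_powr_pair_transcendental[OF assms \<open>prime 2\<close> \<open>0 < x\<close> \<open>0 < y\<close> xy]
      schanuel_powr_pair_transcendental[OF assms \<open>prime 2\<close> \<open>0 < y\<close> \<open>0 < x\<close> xy(2,1)] by simp_all
  moreover have "\<not> algebraic s" "\<not> algebraic t"
    using schanuel_powr_pair_transcendental[OF assms \<open>prime 19\<close> \<open>0 < s\<close> \<open>0 < t\<close> st]
      schanuel_powr_pair_transcendental[OF assms \<open>prime 19\<close> \<open>0 < t\<close> \<open>0 < s\<close> st(2,1)] by simp_all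
  ultimately show ?thesis
    using \<open>0 < x\<close> \<open>0 < y\<close> \<open>0 < s\<close> \<open>0 < t\<close> \<open>s \<noteq> t\<close> xy st
    by (intro exI[of _ x] exI[of _ y] exI[of _ s] exI[of _ t]) simp
qed

end
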